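(* Let $H$ be a real-valued harmonic function in $\mathbb{D}=\{|z|<1\}$ and let $u(z)=H(z)+\frac12(1-|z|^{2})\big(zH_z(z)+\overline{z}H_{\overline{z}}(z)\big)$ for $z\in\mathbb{D}$. Suppose $u\in C^{1}(\overline{\mathbb{D}})$ and $M\in\mathbb{R}$ is such that $u\le M$ on $\mathbb{T}=\{|z|=1\}$. Then $u\le M$ on $\mathbb{D}$.
   Context: $\overline{\mathbb{D}}$ is the closed unit disk; $u\in C^1(\overline{\mathbb{D}})$ means $u$ extends to a $C^1$ function on $\overline{\mathbb{D}}$, and $u$ on $\mathbb{T}$ refers to these boundary values. Note $zH_z+\overline zH_{\overline z}=r\,\partial H/\partial r$ for $z=re^{i\theta}$. *)

theory Defs
  imports "HOL-Analysis.Analysis"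
begin

definition harmonic_on :: "(complex \<Rightarrow> real) \<Rightarrow> complex set \<Rightarrow> bool" where
  "harmonic_on H S \<longleftrightarrow> open S \<and>
     (\<exists>Hx Hy Hxx Hxy Hyx Hyy.
        (\<forall>z\<in>S. (H has_derivative (\<lambda>h. Re h * Hx z + Im h * Hy z)) (at z)
              \<and> (Hx has_derivative (\<lambda>h. Re h * Hxx z + Im h * Hxy z)) (at z)
              \<and> (Hy has_derivative (\<lambda>h. Re h * Hyx z + Im h * Hyy z)) (at z)
              \<and> Hxx z + Hyy z = 0)
        \<and> continuous_on S Hxx \<and> continuous_on S Hxy
        \<and> continuous_on S Hyx \<and> continuous_on S Hyy)"

text \<open>z H_z + conj z H_{conj z} = r dH/dr = DH(z)(z), the Frechet derivative applied to z.\<close>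
definition u_of :: "(complex \<Rightarrow> real) \<Rightarrow> complex \<Rightarrow> real" where
  "u_of H z = H z + (1/2) * (1 - (cmod z)^2) * frechet_derivative H (at z) z"

definition C1_closed_disk :: "(complex \<Rightarrow> real) \<Rightarrow> (complex \<Rightarrow> real) \<Rightarrow> bool" where
  "C1_closed_disk f U \<longleftrightarrow> (\<forall>z\<in>ball 0 1. U z = f z) \<and>
     (\<exists>U' :: complex \<Rightarrow> complex \<Rightarrow>\<^sub>L real.
        (\<forall>z\<in>cball 0 1. (U has_derivative blinfun_apply (U' z)) (at z within cball 0 1))
        \<and> continuous_on (cball 0 1) U')"

end

theory Submission
  imports Defs "HOL-Complex_Analysis.Complex_Analysis"
begin

(* On the disk H = Re F with F holomorphic (the mixed partials of H agree, so H_x - i H_y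
   satisfies the Cauchy-Riemann equations), and then u = Re F + (1 - |z|^2)/2 Re (z F'(z)).
   Let U attain its maximum m over the closed disk at z0 and suppose z0 is interior.
   Along every ray, u <= m makes (Re F(sz) - m) s^2 / (1 - |z|^2 s^2) nonincreasing in s,
   whence Re F <= m. In the coordinates z = z0 exp w, the first- and second-order
   conditions for the maximum of u at w = 0 in the real and in the imaginary direction
   add up to |z0|^2 Re (z0 F'(z0)) <= 0, hence Re F(z0) >= m. So Re F has an interior
   maximum, F is constant, u is constant on the disk, and by continuity its value m is
   also taken on the circle, where U <= M. *)

lemma has_real_derivative_along_line:
  fixes G :: "complex \<Rightarrow> real"
  assumes "(G has_derivative (\<lambda>h. Re h * a + Im h * b)) (at (z + of_real s * v))"
  shows "((\<lambda>s. G (z + of_real s * v)) has_real_derivative (Re v * a + Im v * b)) (at s)"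
proof -
  have line: "((\<lambda>s. z + of_real s * v) has_derivative (\<lambda>h. of_real h * v)) (at s)"
    by (auto intro!: derivative_eq_intros)
  have "((G \<circ> (\<lambda>s. z + of_real s * v)) has_derivative
          ((\<lambda>h. Re h * a + Im h * b) \<circ> (\<lambda>h. of_real h * v))) (at s)"
    by (rule diff_chain_at[OF line]) (use assms in simp)
  moreover have "(\<lambda>h. Re h * a + Im h * b) \<circ> (\<lambda>h. of_real h * v) = (*) (Re v * a + Im v * b)"
    by (auto simp: fun_eq_iff algebra_simps)
  ultimately show ?thesis
    unfolding has_field_derivative_def by (simp add: o_def)
qed

lemma has_real_derivative_Re_along_line:
  assumes "(F has_field_derivative d) (at (z + of_real s * v))"
  shows "((\<lambda>s. Re (F (z + of_real s * v))) has_real_derivative Re (d * v)) (at s)"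
proof -
  have "((\<lambda>w. Re (F w)) has_derivative (\<lambda>h. Re h * Re d + Im h * - Im d)) (at (z + of_real s * v))"
    using has_derivative_Re[OF assms[unfolded has_field_derivative_def]] by (simp add: algebra_simps)
  from has_real_derivative_along_line[OF this] show ?thesis
    by (simp add: algebra_simps)
qed

lemma mixed_partials_meet_in_square:
  fixes H Hx Hy Hxx Hxy Hyx Hyy :: "complex \<Rightarrow> real"
  assumes t: "0 < t"
    and square: "\<And>s q. 0 \<le> s \<Longrightarrow> s \<le> t \<Longrightarrow> 0 \<le> q \<Longrightarrow> q \<le> t \<Longrightarrow> z + of_real s + \<i> * of_real q \<in> S"
    and H: "\<And>w. w \<in> S \<Longrightarrow> (H has_derivative (\<lambda>h. Re h * Hx w + Im h * Hy w)) (at w)"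
    and Hx: "\<And>w. w \<in> S \<Longrightarrow> (Hx has_derivative (\<lambda>h. Re h * Hxx w + Im h * Hxy w)) (at w)"
    and Hy: "\<And>w. w \<in> S \<Longrightarrow> (Hy has_derivative (\<lambda>h. Re h * Hyx w + Im h * Hyy w)) (at w)"
  obtains w1 w2 where "w1 \<in> cball z (2 * t)" "w2 \<in> cball z (2 * t)" "Hxy w1 = Hyx w2"
proof -
  define P where "P s q = z + of_real s + \<i> * of_real q" for s q :: real
  have P_in_cball: "P s q \<in> cball z (2 * t)" if "0 \<le> s" "s \<le> t" "0 \<le> q" "q \<le> t" for s q
  proof -
    have "cmod (of_real s + \<i> * of_real q) \<le> cmod (of_real s) + cmod (\<i> * of_real q)"
      by (rule norm_triangle_ineq)
    also have "\<dots> \<le> 2 * t"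
      using that by (simp add: norm_mult)
    finally show ?thesis
      unfolding mem_cball dist_commute[of z] by (simp add: P_def dist_norm)
  qed
  have P_in_S: "P s q \<in> S" if "0 \<le> s" "s \<le> t" "0 \<le> q" "q \<le> t" for s q
    using square[OF that] by (simp add: P_def)
  have d_horizontal: "((\<lambda>s. G (P s q)) has_real_derivative Gx (P s q)) (at s)"
    if "(G has_derivative (\<lambda>h. Re h * Gx (P s q) + Im h * Gy (P s q))) (at (P s q))"
    for G Gx Gy :: "complex \<Rightarrow> real" and s q
  proof -
    have "\<And>s. P s q = (z + \<i> * of_real q) + of_real s * 1"
      by (simp add: P_def)
    then show ?thesis
      using has_real_derivative_along_line[of G "Gx (P s q)" "Gy (P s q)" "z + \<i> * of_real q" s 1] that
      by simp
  qed
  have d_vertical: "((\<lambda>q. G (P s q)) has_real_derivative Gy (P s q)) (at q)"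
    if "(G has_derivative (\<lambda>h. Re h * Gx (P s q) + Im h * Gy (P s q))) (at (P s q))"
    for G Gx Gy :: "complex \<Rightarrow> real" and s q
  proof -
    have "\<And>q. P s q = (z + of_real s) + of_real q * \<i>"
      by (simp add: P_def algebra_simps)
    then show ?thesis
      using has_real_derivative_along_line[of G "Gx (P s q)" "Gy (P s q)" "z + of_real s" q \<i>] that
      by simp
  qed
  \<comment> \<open>The second difference H(P t t) - H(P t 0) - H(P 0 t) + H(P 0 0), expanded by the
    mean value theorem first in s and then in q, and in the opposite order.\<close>
  have "\<exists>\<xi>>0. \<xi> < t \<and> (H (P t t) - H (P t 0)) - (H (P 0 t) - H (P 0 0))
      = (t - 0) * (Hx (P \<xi> t) - Hx (P \<xi> 0))"
    by (rule MVT2) (use t in \<open>auto intro!: derivative_eq_intros d_horizontal H P_in_S\<close>)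
  then obtain \<xi> where \<xi>: "0 < \<xi>" "\<xi> < t"
    and D1: "H (P t t) - H (P t 0) - H (P 0 t) + H (P 0 0) = t * (Hx (P \<xi> t) - Hx (P \<xi> 0))"
    by auto
  have "\<exists>\<eta>>0. \<eta> < t \<and> Hx (P \<xi> t) - Hx (P \<xi> 0) = (t - 0) * Hxy (P \<xi> \<eta>)"
    by (rule MVT2) (use t \<xi> in \<open>auto intro!: d_vertical[where Gx = Hxx] Hx P_in_S\<close>)
  then obtain \<eta> where \<eta>: "0 < \<eta>" "\<eta> < t" and D2: "Hx (P \<xi> t) - Hx (P \<xi> 0) = t * Hxy (P \<xi> \<eta>)"
    by auto
  have "\<exists>\<eta>>0. \<eta> < t \<and> (H (P t t) - H (P 0 t)) - (H (P t 0) - H (P 0 0))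
      = (t - 0) * (Hy (P t \<eta>) - Hy (P 0 \<eta>))"
    by (rule MVT2) (use t in \<open>auto intro!: derivative_eq_intros d_vertical H P_in_S\<close>)
  then obtain \<eta>' where \<eta>': "0 < \<eta>'" "\<eta>' < t"
    and D3: "H (P t t) - H (P t 0) - H (P 0 t) + H (P 0 0) = t * (Hy (P t \<eta>') - Hy (P 0 \<eta>'))"
    by (auto simp: algebra_simps)
  have "\<exists>\<xi>>0. \<xi> < t \<and> Hy (P t \<eta>') - Hy (P 0 \<eta>') = (t - 0) * Hyx (P \<xi> \<eta>')"
    by (rule MVT2) (use t \<eta>' in \<open>auto intro!: d_horizontal[where Gy = Hyy] Hy P_in_S\<close>)
  then obtain \<xi>' where \<xi>': "0 < \<xi>'" "\<xi>' < t" and D4: "Hy (P t \<eta>') - Hy (P 0 \<eta>') = t * Hyx (P \<xi>' \<eta>')"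
    by auto
  have "t * (t * Hxy (P \<xi> \<eta>)) = t * (t * Hyx (P \<xi>' \<eta>'))"
    using D1 D2 D3 D4 by (simp only:)
  then have "Hxy (P \<xi> \<eta>) = Hyx (P \<xi>' \<eta>')"
    using t by simp
  moreover have "P \<xi> \<eta> \<in> cball z (2 * t)" "P \<xi>' \<eta>' \<in> cball z (2 * t)"
    using \<xi> \<eta> \<xi>' \<eta>' P_in_cball by simp_all
  ultimately show ?thesis
    using that by blast
qed

lemma mixed_partials_eq:
  fixes H Hx Hy Hxx Hxy Hyx Hyy :: "complex \<Rightarrow> real"
  assumes "open S" "z \<in> S"
    and H: "\<And>w. w \<in> S \<Longrightarrow> (H has_derivative (\<lambda>h. Re h * Hx w + Im h * Hy w)) (at w)"
    and Hx: "\<And>w. w \<in> S \<Longrightarrow> (Hx has_derivative (\<lambda>h. Re h * Hxx w + Im h * Hxy w)) (at w)"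
    and Hy: "\<And>w. w \<in> S \<Longrightarrow> (Hy has_derivative (\<lambda>h. Re h * Hyx w + Im h * Hyy w)) (at w)"
    and "continuous_on S Hxy" "continuous_on S Hyx"
  shows "Hxy z = Hyx z"
proof (rule ccontr)
  assume "Hxy z \<noteq> Hyx z"
  define e where "e = \<bar>Hxy z - Hyx z\<bar> / 2"
  have "e > 0"
    using \<open>Hxy z \<noteq> Hyx z\<close> by (simp add: e_def)
  obtain r where r: "r > 0" "ball z r \<subseteq> S"
    using \<open>open S\<close> \<open>z \<in> S\<close> openE by blast
  obtain d1 where d1: "d1 > 0" "\<And>w. w \<in> S \<Longrightarrow> dist w z < d1 \<Longrightarrow> dist (Hxy w) (Hxy z) < e"
    using \<open>continuous_on S Hxy\<close> \<open>z \<in> S\<close> \<open>e > 0\<close> unfolding continuous_on_iff by metis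
  obtain d2 where d2: "d2 > 0" "\<And>w. w \<in> S \<Longrightarrow> dist w z < d2 \<Longrightarrow> dist (Hyx w) (Hyx z) < e"
    using \<open>continuous_on S Hyx\<close> \<open>z \<in> S\<close> \<open>e > 0\<close> unfolding continuous_on_iff by metis
  define t where "t = min r (min d1 d2) / 4"
  have t: "0 < t" "2 * t < r" "2 * t < d1" "2 * t < d2"
    using r d1 d2 by (auto simp: t_def)
  have "z + of_real s + \<i> * of_real q \<in> S" if "0 \<le> s" "s \<le> t" "0 \<le> q" "q \<le> t" for s q
  proof -
    have "cmod (of_real s + \<i> * of_real q) \<le> cmod (of_real s) + cmod (\<i> * of_real q)"
      by (rule norm_triangle_ineq)
    also have "\<dots> < r"
      using that t by (simp add: norm_mult)
    finally have "z + of_real s + \<i> * of_real q \<in> ball z r"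
      unfolding mem_ball dist_commute[of z] by (simp add: dist_norm)
    then show ?thesis
      using r by blast
  qed
  then obtain w1 w2 where w: "w1 \<in> cball z (2 * t)" "w2 \<in> cball z (2 * t)" "Hxy w1 = Hyx w2"
    using mixed_partials_meet_in_square[OF t(1) _ H Hx Hy] by metis
  have "w1 \<in> S" "w2 \<in> S"
    using w(1,2) t r by (auto simp: subset_iff)
  then have "dist (Hxy w1) (Hxy z) < e" "dist (Hyx w2) (Hyx z) < e"
    using d1(2)[of w1] d2(2)[of w2] w(1,2) t by (auto simp: dist_commute)
  then show False
    using w(3) by (simp add: dist_real_def e_def abs_if split: if_splits)
qed

lemma harmonic_on_holomorphic_gradient:
  assumes "harmonic_on H S"
  obtains f where "f holomorphic_on S"
    "\<And>z. z \<in> S \<Longrightarrow> (H has_derivative (\<lambda>h. Re (f z * h))) (at z)"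
proof -
  obtain Hx Hy Hxx Hxy Hyx Hyy where "open S" and
    D: "\<And>z. z \<in> S \<Longrightarrow> (H has_derivative (\<lambda>h. Re h * Hx z + Im h * Hy z)) (at z)
              \<and> (Hx has_derivative (\<lambda>h. Re h * Hxx z + Im h * Hxy z)) (at z)
              \<and> (Hy has_derivative (\<lambda>h. Re h * Hyx z + Im h * Hyy z)) (at z)
              \<and> Hxx z + Hyy z = 0"
    and "continuous_on S Hxy" "continuous_on S Hyx"
    using assms unfolding harmonic_on_def by blast
  define f where "f z = complex_of_real (Hx z) - \<i> * complex_of_real (Hy z)" for z
  have "(f has_field_derivative (of_real (Hxx z) - \<i> * of_real (Hyx z))) (at z)" if "z \<in> S" for z
  proof -
    have "Hxy z = Hyx z"
      by (rule mixed_partials_eq[of S z H Hx Hy Hxx Hxy Hyx Hyy])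
        (use \<open>open S\<close> that D \<open>continuous_on S Hxy\<close> \<open>continuous_on S Hyx\<close> in auto)
    moreover have "Hyy z = - Hxx z"
      using D[OF that] by linarith
    ultimately have "(\<lambda>h. of_real (Re h * Hxx z + Im h * Hxy z) - \<i> * of_real (Re h * Hyx z + Im h * Hyy z))
        = (*) (of_real (Hxx z) - \<i> * of_real (Hyx z))"
      by (auto simp: fun_eq_iff complex_eq_iff algebra_simps)
    moreover have "(f has_derivative (\<lambda>h. of_real (Re h * Hxx z + Im h * Hxy z)
        - \<i> * of_real (Re h * Hyx z + Im h * Hyy z))) (at z)"
      unfolding f_def using D[OF that]
      by (auto intro!: derivative_eq_intros bounded_linear.has_derivative[OF bounded_linear_of_real])
    ultimately show ?thesis
      unfolding has_field_derivative_def by simp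
  qed
  then have "f holomorphic_on S"
    using holomorphic_on_open[OF \<open>open S\<close>] by blast
  moreover have "(\<lambda>h. Re h * Hx z + Im h * Hy z) = (\<lambda>h. Re (f z * h))" for z
    by (simp add: fun_eq_iff f_def)
  ultimately show ?thesis
    using that D by metis
qed

lemma harmonic_on_convex_Re_holomorphic:
  assumes "harmonic_on H S" "convex S"
  obtains F where "F holomorphic_on S" "\<And>z. z \<in> S \<Longrightarrow> H z = Re (F z)"
    "\<And>z. z \<in> S \<Longrightarrow> (H has_derivative (\<lambda>h. Re (deriv F z * h))) (at z)"
proof -
  have "open S"
    using assms(1) by (simp add: harmonic_on_def)
  obtain f where "f holomorphic_on S" and dH: "\<And>z. z \<in> S \<Longrightarrow> (H has_derivative (\<lambda>h. Re (f z * h))) (at z)"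
    using harmonic_on_holomorphic_gradient[OF assms(1)] by blast
  obtain F0 where F0: "\<And>z. z \<in> S \<Longrightarrow> (F0 has_field_derivative f z) (at z)"
    using holomorphic_convex_primitive'[OF \<open>convex S\<close> \<open>open S\<close> \<open>f holomorphic_on S\<close>]
    by (metis at_within_open \<open>open S\<close>)
  have "\<exists>c. \<forall>z\<in>S. H z - Re (F0 z) = c"
  proof (rule has_derivative_zero_constant[OF \<open>convex S\<close>])
    fix z assume "z \<in> S"
    have "((\<lambda>z. H z - Re (F0 z)) has_derivative (\<lambda>h. Re (f z * h) - Re (f z * h))) (at z)"
      by (rule has_derivative_diff[OF dH[OF \<open>z \<in> S\<close>]
            has_derivative_Re[OF F0[OF \<open>z \<in> S\<close>, unfolded has_field_derivative_def]]])
    then show "((\<lambda>z. H z - Re (F0 z)) has_derivative (\<lambda>h. 0)) (at z within S)"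
      by (simp add: has_derivative_at_withinI)
  qed
  then obtain c where c: "\<And>z. z \<in> S \<Longrightarrow> H z - Re (F0 z) = c"
    by blast
  define F where "F z = F0 z + of_real c" for z
  have dF: "(F has_field_derivative f z) (at z)" if "z \<in> S" for z
    unfolding F_def using F0[OF that] by (auto intro!: derivative_eq_intros)
  show ?thesis
  proof
    show "F holomorphic_on S"
      using dF holomorphic_on_open[OF \<open>open S\<close>] by blast
    show "H z = Re (F z)" if "z \<in> S" for z
      using c[OF that] by (simp add: F_def)
    show "(H has_derivative (\<lambda>h. Re (deriv F z * h))) (at z)" if "z \<in> S" for z
      using dH[OF that] DERIV_imp_deriv[OF dF[OF that]] by simp
  qed
qed

definition euler_deriv :: "(complex \<Rightarrow> complex) \<Rightarrow> complex \<Rightarrow> complex" where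
  "euler_deriv F z = z * deriv F z"

definition u_holo :: "(complex \<Rightarrow> complex) \<Rightarrow> complex \<Rightarrow> real" where
  "u_holo F z = Re (F z) + (1/2) * (1 - (cmod z)^2) * Re (euler_deriv F z)"

lemma u_of_eq_u_holo:
  assumes "(H has_derivative (\<lambda>h. Re (deriv F z * h))) (at z)" "H z = Re (F z)"
  shows "u_of H z = u_holo F z"
proof -
  have "frechet_derivative H (at z) = (\<lambda>h. Re (deriv F z * h))"
    using frechet_derivative_at[OF assms(1)] by simp
  then show ?thesis
    using assms(2) by (simp add: u_of_def u_holo_def euler_deriv_def mult.commute)
qed

lemma le_of_radial_u_bound:
  fixes q q' :: "real \<Rightarrow> real"
  assumes "0 \<le> \<rho>" "\<rho> < 1"
    and q: "\<And>s. 0 \<le> s \<Longrightarrow> s \<le> 1 \<Longrightarrow> (q has_real_derivative q' s) (at s)"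
    and bound: "\<And>s. 0 \<le> s \<Longrightarrow> s \<le> 1 \<Longrightarrow> q s + (1/2) * (1 - \<rho> * s^2) * (s * q' s) \<le> m"
  shows "q 1 \<le> m"
proof -
  define \<psi> where "\<psi> s = (q s - m) * s^2 / (1 - \<rho> * s^2)" for s
  have "\<psi> 1 \<le> \<psi> 0"
  proof (rule DERIV_nonpos_imp_nonincreasing[where f = \<psi>])
    fix s :: real assume s: "0 \<le> s" "s \<le> 1"
    have "s^2 \<le> 1"
      using s by (simp add: power_le_one)
    then have pos: "0 < 1 - \<rho> * s^2"
      using assms(1,2) mult_left_le_one_le[of \<rho> "s^2"] by (simp add: mult.commute)
    have "(\<psi> has_real_derivative
        2 * s * (q s + (1/2) * (1 - \<rho> * s^2) * (s * q' s) - m) / (1 - \<rho> * s^2)^2) (at s)"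
      unfolding \<psi>_def using pos
      by (auto intro!: derivative_eq_intros q[OF s] simp: divide_simps) (simp add: algebra_simps power2_eq_square)
    moreover have "2 * s * (q s + (1/2) * (1 - \<rho> * s^2) * (s * q' s) - m) / (1 - \<rho> * s^2)^2 \<le> 0"
      using bound[OF s] s by (intro divide_nonpos_nonneg mult_nonneg_nonpos) auto
    ultimately show "\<exists>y. (\<psi> has_real_derivative y) (at s) \<and> y \<le> 0"
      by blast
  qed simp
  then show ?thesis
    using assms(2) by (simp add: \<psi>_def divide_le_0_iff)
qed

lemma Re_le_of_u_holo_le:
  assumes "F holomorphic_on ball 0 1" and u_le: "\<And>w. w \<in> ball 0 1 \<Longrightarrow> u_holo F w \<le> m"
    and "z \<in> ball 0 1"
  shows "Re (F z) \<le> m"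
proof -
  have in_ball: "of_real s * z \<in> ball 0 1" if "0 \<le> s" "s \<le> 1" for s
  proof -
    have "cmod (of_real s * z) \<le> cmod z"
      using that by (simp add: norm_mult mult_left_le_one_le)
    then show ?thesis
      using \<open>z \<in> ball 0 1\<close> by simp
  qed
  have "Re (F (of_real 1 * z)) \<le> m"
  proof (rule le_of_radial_u_bound)
    show "0 \<le> (cmod z)^2" "(cmod z)^2 < 1"
      using \<open>z \<in> ball 0 1\<close> by (auto simp: power_less_one_iff)
    fix s :: real assume s: "0 \<le> s" "s \<le> 1"
    have "(F has_field_derivative deriv F (of_real s * z)) (at (0 + of_real s * z))"
      using holomorphic_derivI[OF assms(1) open_ball in_ball[OF s]] by simp
    then show "((\<lambda>s. Re (F (of_real s * z))) has_real_derivative Re (deriv F (of_real s * z) * z)) (at s)"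
      using has_real_derivative_Re_along_line by fastforce
    show "Re (F (of_real s * z)) + (1/2) * (1 - (cmod z)^2 * s^2) * (s * Re (deriv F (of_real s * z) * z)) \<le> m"
      using u_le[OF in_ball[OF s]] s by (simp add: u_holo_def euler_deriv_def norm_mult power_mult_distrib algebra_simps)
  qed
  then show ?thesis
    by simp
qed

lemma holomorphic_on_euler_deriv:
  assumes "F holomorphic_on S" "open S"
  shows "euler_deriv F holomorphic_on S"
  unfolding euler_deriv_def[abs_def]
  by (intro holomorphic_on_mult holomorphic_deriv assms holomorphic_on_ident)

lemma has_real_derivative_Re_exp_line:
  assumes "F holomorphic_on S" "open S" "exp (of_real s * v) * z0 \<in> S"
  shows "((\<lambda>s. Re (c * F (exp (of_real s * v) * z0))) has_real_derivative
           Re (c * v * euler_deriv F (exp (of_real s * v) * z0))) (at s)"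
proof -
  let ?w = "exp (of_real s * v) * z0"
  have "(F has_field_derivative deriv F ?w) (at ?w)"
    by (rule holomorphic_derivI[OF assms])
  then have "((\<lambda>\<zeta>. c * F (exp \<zeta> * z0)) has_field_derivative c * euler_deriv F ?w) (at (0 + of_real s * v))"
    by (auto intro!: derivative_eq_intros DERIV_chain2[where f = F] simp: euler_deriv_def)
  from has_real_derivative_Re_along_line[OF this] show ?thesis
    by (simp add: mult_ac)
qed

lemma local_max_imp_deriv2_nonpos:
  fixes g g' :: "real \<Rightarrow> real"
  assumes "d > 0" and g: "\<And>x. \<bar>x\<bar> < d \<Longrightarrow> (g has_real_derivative g' x) (at x)"
    and g': "(g' has_real_derivative l) (at 0)" and max: "\<And>x. \<bar>x\<bar> < d \<Longrightarrow> g x \<le> g 0"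
  shows "g' 0 = 0" "l \<le> 0"
proof -
  show "g' 0 = 0"
    by (rule DERIV_local_max[OF g[of 0] \<open>d > 0\<close>]) (use \<open>d > 0\<close> max in auto)
  show "l \<le> 0"
  proof (rule ccontr)
    assume "\<not> l \<le> 0"
    from DERIV_pos_inc_right[OF g'] this
    obtain d' where d': "d' > 0" "\<And>h. h > 0 \<Longrightarrow> h < d' \<Longrightarrow> g' 0 < g' (0 + h)"
      by auto
    define h where "h = min d d' / 2"
    have h: "0 < h" "h < d" "h < d'"
      using \<open>d > 0\<close> d' by (auto simp: h_def)
    have "\<exists>\<xi>>0. \<xi> < h \<and> g h - g 0 = (h - 0) * g' \<xi>"
      by (rule MVT2) (use h in \<open>auto intro!: g\<close>)
    then obtain \<xi> where \<xi>: "0 < \<xi>" "\<xi> < h" "g h - g 0 = h * g' \<xi>"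
      by auto
    have "g' \<xi> > 0"
      using d'(2)[of \<xi>] \<xi> h \<open>g' 0 = 0\<close> by simp
    then have "g h > g 0"
      using \<xi> h by (simp add: algebra_simps)
    with max[of h] h show False
      by simp
  qed
qed

lemma u_holo_max_radial:
  assumes hol: "F holomorphic_on ball 0 1" and z0: "z0 \<in> ball 0 1" "z0 \<noteq> 0"
    and max: "\<And>w. w \<in> ball 0 1 \<Longrightarrow> u_holo F w \<le> u_holo F z0"
  defines "R \<equiv> (cmod z0)^2" and "A \<equiv> euler_deriv F"
    and "B \<equiv> euler_deriv (euler_deriv F)" and "C \<equiv> euler_deriv (euler_deriv (euler_deriv F))"
  shows "2 * Re (A z0) + Re (B z0) = 0"
    and "Re (B z0) - 2 * R * Re (A z0) - 2 * R * Re (B z0) + (1 - R) / 2 * Re (C z0) \<le> 0"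
proof -
  have holA: "A holomorphic_on ball 0 1" and holB: "B holomorphic_on ball 0 1"
    unfolding A_def B_def by (intro holomorphic_on_euler_deriv hol open_ball)+
  define r where "r = cmod z0"
  have r: "0 < r" "r < 1"
    using z0 by (auto simp: r_def)
  define d where "d = - ln r"
  have "d > 0"
    using r by (simp add: d_def)
  \<comment> \<open>The factor 1 keeps p in the shape of a line through 0 in direction 1.\<close>
  define p where "p x = exp (of_real x * 1) * z0" for x :: real
  have norm_p: "cmod (p x) = exp x * r" for x
    by (simp add: p_def norm_mult r_def norm_exp_eq_Re)
  have p_in_ball: "p x \<in> ball 0 1" if "\<bar>x\<bar> < d" for x
  proof -
    have "exp x < exp d"
      using that by simp
    also have "exp d = 1 / r"
      using r by (simp add: d_def exp_minus inverse_eq_divide)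
    finally show ?thesis
      using r norm_p[of x] by (simp add: field_simps)
  qed
  have radial: "((\<lambda>x. Re (X (p x))) has_real_derivative Re (euler_deriv X (p x))) (at x)"
    if "X holomorphic_on ball 0 1" "\<bar>x\<bar> < d" for X x
    using has_real_derivative_Re_exp_line[OF that(1) open_ball p_in_ball[OF that(2), unfolded p_def], of 1]
    by (simp add: p_def)
  define k where "k x = (1/2) * (1 - (exp x)^2 * R)" for x :: real
  define g where "g x = Re (F (p x)) + k x * Re (A (p x))" for x
  define g' where "g' x = Re (A (p x)) + (- ((exp x)^2 * R) * Re (A (p x)) + Re (B (p x)) * k x)" for x
  have dk: "(k has_real_derivative - ((exp x)^2 * R)) (at x)" for x
    unfolding k_def by (auto intro!: derivative_eq_intros simp: power2_eq_square)
  have dk': "((\<lambda>x. - ((exp x)^2 * R)) has_real_derivative - (2 * (exp x)^2 * R)) (at x)" for x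
    by (auto intro!: derivative_eq_intros simp: power2_eq_square)
  have dF: "((\<lambda>x. Re (F (p x))) has_real_derivative Re (A (p x))) (at x)"
    and dA: "((\<lambda>x. Re (A (p x))) has_real_derivative Re (B (p x))) (at x)"
    and dB: "((\<lambda>x. Re (B (p x))) has_real_derivative Re (C (p x))) (at x)" if "\<bar>x\<bar> < d" for x
    using radial[OF hol that] radial[OF holA that] radial[OF holB that]
    by (simp_all add: A_def B_def C_def)
  have dg: "(g has_real_derivative g' x) (at x)" if "\<bar>x\<bar> < d" for x
    unfolding g_def g'_def by (rule DERIV_add[OF dF[OF that] DERIV_mult[OF dk dA[OF that]]])
  have "\<bar>0\<bar> < d"
    using \<open>d > 0\<close> by simp
  have dg': "(g' has_real_derivative
      Re (B z0) - 2 * R * Re (A z0) - 2 * R * Re (B z0) + (1 - R) / 2 * Re (C z0)) (at 0)"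
    unfolding g'_def
    using DERIV_add[OF dA[OF \<open>\<bar>0\<bar> < d\<close>]
        DERIV_add[OF DERIV_mult[OF dk' dA[OF \<open>\<bar>0\<bar> < d\<close>]] DERIV_mult[OF dB[OF \<open>\<bar>0\<bar> < d\<close>] dk]]]
    by (rule DERIV_cong) (simp add: p_def k_def algebra_simps)
  have g_eq: "g x = u_holo F (p x)" for x
    by (simp add: g_def k_def u_holo_def A_def norm_p R_def r_def power_mult_distrib)
  have "g x \<le> g 0" if "\<bar>x\<bar> < d" for x
    using max[OF p_in_ball[OF that]] by (simp add: g_eq p_def)
  note second_order = local_max_imp_deriv2_nonpos[OF \<open>d > 0\<close> dg dg' this]
  from second_order(1) have "Re (A z0) - R * Re (A z0) + Re (B z0) * ((1 - R) / 2) = 0"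
    by (simp add: g'_def k_def p_def)
  moreover have "(1 - R) * (2 * Re (A z0) + Re (B z0))
      = 2 * (Re (A z0) - R * Re (A z0) + Re (B z0) * ((1 - R) / 2))"
    by (simp add: field_simps)
  ultimately have "(1 - R) * (2 * Re (A z0) + Re (B z0)) = 0"
    by simp
  moreover have "R < 1"
    using r by (simp add: R_def r_def[symmetric] power_less_one_iff)
  ultimately show "2 * Re (A z0) + Re (B z0) = 0"
    by simp
  show "Re (B z0) - 2 * R * Re (A z0) - 2 * R * Re (B z0) + (1 - R) / 2 * Re (C z0) \<le> 0"
    by (rule second_order(2))
qed

lemma u_holo_max_angular:
  assumes hol: "F holomorphic_on ball 0 1" and z0: "z0 \<in> ball 0 1"
    and max: "\<And>w. w \<in> ball 0 1 \<Longrightarrow> u_holo F w \<le> u_holo F z0"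
  defines "R \<equiv> (cmod z0)^2"
    and "B \<equiv> euler_deriv (euler_deriv F)" and "C \<equiv> euler_deriv (euler_deriv (euler_deriv F))"
  shows "- Re (B z0) - (1 - R) / 2 * Re (C z0) \<le> 0"
proof -
  define A where "A = euler_deriv F"
  have holA: "A holomorphic_on ball 0 1" and holB: "B holomorphic_on ball 0 1"
    unfolding A_def B_def by (intro holomorphic_on_euler_deriv hol open_ball)+
  define q where "q y = exp (of_real y * \<i>) * z0" for y :: real
  have norm_q: "cmod (q y) = cmod z0" for y
    by (simp add: q_def norm_mult norm_exp_eq_Re)
  have q_in_ball: "q y \<in> ball 0 1" for y
    using z0 norm_q[of y] by simp
  have angular: "((\<lambda>y. Re (c * X (q y))) has_real_derivative Re (c * \<i> * euler_deriv X (q y))) (at y)"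
    if "X holomorphic_on ball 0 1" for X c y
    using has_real_derivative_Re_exp_line[OF that open_ball q_in_ball[of y, unfolded q_def]]
    by (simp add: q_def)
  define c0 where "c0 = (1 - R) / 2"
  define g where "g y = Re (F (q y)) + c0 * Re (A (q y))" for y
  define g' where "g' y = Re (\<i> * A (q y)) + c0 * Re (\<i> * B (q y))" for y
  have dg: "(g has_real_derivative g' y) (at y)" for y
    unfolding g_def g'_def
    using DERIV_add[OF angular[OF hol, of 1] DERIV_cmult[OF angular[OF holA, of 1]]]
    by (simp add: A_def B_def)
  have dg': "(g' has_real_derivative - Re (B z0) - c0 * Re (C z0)) (at 0)"
    unfolding g'_def
    using DERIV_add[OF angular[OF holA, of \<i> 0] DERIV_cmult[OF angular[OF holB, of \<i> 0]]]
    by (simp add: A_def B_def C_def q_def)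
  have g_eq: "g y = u_holo F (q y)" for y
    by (simp add: g_def c0_def u_holo_def A_def norm_q R_def)
  have "g y \<le> g 0" if "\<bar>y\<bar> < 1" for y
    using max[OF q_in_ball[of y]] by (simp add: g_eq q_def)
  from local_max_imp_deriv2_nonpos(2)[OF zero_less_one dg dg' this]
  show ?thesis
    by (simp add: c0_def)
qed

lemma u_holo_max_imp_Re_euler_deriv_nonpos:
  assumes hol: "F holomorphic_on ball 0 1" and z0: "z0 \<in> ball 0 1"
    and max: "\<And>w. w \<in> ball 0 1 \<Longrightarrow> u_holo F w \<le> u_holo F z0"
  shows "Re (euler_deriv F z0) \<le> 0"
proof (cases "z0 = 0")
  case True
  then show ?thesis
    by (simp add: euler_deriv_def)
next
  case False
  define R where "R = (cmod z0)^2"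
  define \<alpha> \<beta> \<gamma> where "\<alpha> = Re (euler_deriv F z0)" and "\<beta> = Re (euler_deriv (euler_deriv F) z0)"
    and "\<gamma> = Re (euler_deriv (euler_deriv (euler_deriv F)) z0)"
  have "2 * \<alpha> + \<beta> = 0" and radial: "\<beta> - 2 * R * \<alpha> - 2 * R * \<beta> + (1 - R) / 2 * \<gamma> \<le> 0"
    using u_holo_max_radial[OF hol z0 False max] by (simp_all add: R_def \<alpha>_def \<beta>_def \<gamma>_def)
  have angular: "- \<beta> - (1 - R) / 2 * \<gamma> \<le> 0"
    using u_holo_max_angular[OF hol z0 max] by (simp add: R_def \<beta>_def \<gamma>_def)
  have "- 2 * R * \<alpha> - 2 * R * \<beta> \<le> 0"
    using radial angular by linarith
  moreover have "\<beta> = - 2 * \<alpha>"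
    using \<open>2 * \<alpha> + \<beta> = 0\<close> by linarith
  ultimately have "R * \<alpha> \<le> 0"
    by simp
  moreover have "R > 0"
    using False by (simp add: R_def)
  ultimately show ?thesis
    by (simp add: \<alpha>_def mult_le_0_iff)
qed

lemma holomorphic_Re_max_imp_constant_on:
  assumes "F holomorphic_on S" "open S" "connected S" "\<xi> \<in> S"
    and max: "\<And>z. z \<in> S \<Longrightarrow> Re (F z) \<le> Re (F \<xi>)"
  shows "F constant_on S"
proof (rule ccontr)
  assume "\<not> F constant_on S"
  then have "open (F ` S)"
    using open_mapping_thm[OF assms(1-3) assms(2) order.refl] by blast
  then obtain e where "e > 0" "ball (F \<xi>) e \<subseteq> F ` S"
    using \<open>\<xi> \<in> S\<close> openE by blast
  moreover have "F \<xi> + of_real (e/2) \<in> ball (F \<xi>) e"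
    using \<open>e > 0\<close> by (simp add: dist_norm)
  ultimately obtain w where "w \<in> S" "F w = F \<xi> + of_real (e/2)"
    by (metis imageE subsetD)
  with max[of w] \<open>e > 0\<close> show False
    by simp
qed

lemma u_holo_max_imp_constant:
  assumes hol: "F holomorphic_on ball 0 1" and z0: "z0 \<in> ball 0 1"
    and max: "\<And>w. w \<in> ball 0 1 \<Longrightarrow> u_holo F w \<le> u_holo F z0"
    and w: "w \<in> ball 0 1"
  shows "u_holo F w = u_holo F z0"
proof -
  have "(1 - (cmod z0)^2) * Re (euler_deriv F z0) \<le> 0"
    using u_holo_max_imp_Re_euler_deriv_nonpos[OF hol z0 max] z0
    by (simp add: mult_nonneg_nonpos power_le_one)
  then have "u_holo F z0 \<le> Re (F z0)"
    by (simp add: u_holo_def)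
  then have "Re (F z) \<le> Re (F z0)" if "z \<in> ball 0 1" for z
    using Re_le_of_u_holo_le[OF hol max that] by simp
  then have "F constant_on ball 0 1"
    by (intro holomorphic_Re_max_imp_constant_on[OF hol open_ball connected_ball z0])
  then obtain c where c: "\<And>z. z \<in> ball 0 1 \<Longrightarrow> F z = c"
    by (auto simp: constant_on_def)
  have "u_holo F z = Re c" if "z \<in> ball 0 1" for z
  proof -
    have "(F has_field_derivative 0) (at z)"
      by (rule has_field_derivative_transform_within_open[OF DERIV_const open_ball that])
        (simp add: c)
    then show ?thesis
      using c[OF that] by (simp add: u_holo_def euler_deriv_def DERIV_imp_deriv)
  qed
  then show ?thesis
    using w z0 by simp
qed

lemma C1_closed_disk_imp_continuous_on:
  assumes "C1_closed_disk f U"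
  shows "continuous_on (cball 0 1) U"
proof -
  obtain U' :: "complex \<Rightarrow> complex \<Rightarrow>\<^sub>L real"
    where "\<And>z. z \<in> cball 0 1 \<Longrightarrow> (U has_derivative blinfun_apply (U' z)) (at z within cball 0 1)"
    using assms unfolding C1_closed_disk_def by blast
  then show ?thesis
    unfolding continuous_on_eq_continuous_within using has_derivative_continuous by blast
qed

theorem lemma3:
  fixes H U :: "complex \<Rightarrow> real" and M :: real
  assumes "harmonic_on H (ball 0 1)"
    and "C1_closed_disk (u_of H) U"
    and "\<forall>z\<in>sphere 0 1. U z \<le> M"
  shows "\<forall>z\<in>ball 0 1. u_of H z \<le> M"
proof -
  obtain F where hol: "F holomorphic_on ball 0 1" and ReF: "\<And>z. z \<in> ball 0 1 \<Longrightarrow> H z = Re (F z)"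
    and dH: "\<And>z. z \<in> ball 0 1 \<Longrightarrow> (H has_derivative (\<lambda>h. Re (deriv F z * h))) (at z)"
    by (rule harmonic_on_convex_Re_holomorphic[OF assms(1) convex_ball]) (rule that)
  have U_eq: "U z = u_of H z" "u_of H z = u_holo F z" if "z \<in> ball 0 1" for z
  proof -
    show "U z = u_of H z"
      using assms(2) that by (simp add: C1_closed_disk_def)
    show "u_of H z = u_holo F z"
      by (rule u_of_eq_u_holo[OF dH[OF that] ReF[OF that]])
  qed
  have contU: "continuous_on (cball 0 1) U"
    by (rule C1_closed_disk_imp_continuous_on[OF assms(2)])
  have "cball (0::complex) 1 \<noteq> {}"
    by simp
  then obtain z0 where z0: "z0 \<in> cball 0 1" and max: "\<And>z. z \<in> cball 0 1 \<Longrightarrow> U z \<le> U z0"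
    using continuous_attains_sup[OF compact_cball _ contU] by blast
  have U_max: "U z \<le> U z0" if "z \<in> ball 0 1" for z
    using max that by simp
  have "U z0 \<le> M"
  proof (cases "z0 \<in> sphere 0 1")
    case True
    then show ?thesis
      using assms(3) by blast
  next
    case False
    with z0 have "z0 \<in> ball 0 1"
      by auto
    have "u_holo F w \<le> u_holo F z0" if "w \<in> ball 0 1" for w
      using U_max[OF that] U_eq[OF that] U_eq[OF \<open>z0 \<in> ball 0 1\<close>] by simp
    then have const: "U z = U z0" if "z \<in> ball 0 1" for z
      using u_holo_max_imp_constant[OF hol \<open>z0 \<in> ball 0 1\<close> _ that]
        U_eq[OF that] U_eq[OF \<open>z0 \<in> ball 0 1\<close>] by simp
    have closure: "closure (ball (0::complex) 1) = cball 0 1"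
      by (simp add: closure_ball)
    have "U 1 = U z0"
      by (rule continuous_constant_on_closure[of "ball 0 1" U "U z0" 1, OF _ const])
        (simp_all add: closure contU)
    moreover have "U 1 \<le> M"
      using assms(3) by simp
    ultimately show ?thesis
      by simp
  qed
  show ?thesis
  proof
    fix z :: complex assume "z \<in> ball 0 1"
    then show "u_of H z \<le> M"
      using U_max[of z] U_eq(1)[of z] \<open>U z0 \<le> M\<close> by simp
  qed
qed

end
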